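(* Let $\langle A, \leq, \otimes, \ominus, \mathbf{1}\rangle$ be a residuated partially ordered monoid with bottom element $\bot$. Then for every $k\geq1$, $\langle Lex_k(A), \leq_k, \otimes^k, \ominus_k, \mathbf{1}^k\rangle$ is a residuated partially ordered monoid, where for $a=a_1\ldots a_k$, $b=b_1\ldots b_k\in Lex_k(A)$: $$a \ominus_k b = \begin{cases} (a_1 \ominus b_1) \ldots (a_k \ominus b_k) & \text{if } k+1 = \gamma(a,b) = \delta(a,b),\\ (a_1 \ominus b_1) \ldots (a_{\gamma(a,b)} \ominus b_{\gamma(a,b)})\,\bot^{k-\gamma(a,b)} & \text{if } k+1 \neq \gamma(a,b) \leq \delta(a,b),\\ (a_1 \ominus b_1) \ldots (a_{\delta(a,b)} \ominus b_{\delta(a,b)})\,\big(\bigvee Lex_{k-\delta(a,b)}(A)\big) & \text{otherwise.}\end{cases}$$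
   Context: A residuated partially ordered monoid $\langle A, \leq, \otimes, \ominus, \mathbf{1}\rangle$ consists of a partial order $\langle A,\leq\rangle$, a commutative monoid $\langle A,\otimes,\mathbf{1}\rangle$, and a binary operation $\ominus$ with $b \otimes c \leq a$ iff $c \leq a \ominus b$ for all $a,b,c\in A$. $a<b$ means $a\leq b$, $a\neq b$. $I(A) = \{c \in A \mid \forall a,b \in A.\ a \otimes c = b \otimes c \Rightarrow a = b\}$, $C(A)=A\setminus I(A)$. $Lex_k(A)\subseteq A^k$: $Lex_1(A) = A$, $Lex_{k+1}(A) = I(A)\, Lex_k(A) \cup C(A)\{\bot\}^k$ (concatenations of sequences; $\{\bot\}^k$ the singleton of $k$ copies of $\bot$). The order $\leq_k$: $\leq_1=\leq$, and for $k\geq2$, $a_1 \ldots a_k \leq_k b_1 \ldots b_k$ iff $a_1 < b_1$, or $a_1 = b_1$ and $a_2 \ldots a_k \leq_{k-1} b_2 \ldots b_k$. $\otimes^k$ is componentwise, $\mathbf{1}^k=\mathbf{1}\ldots\mathbf{1}$; $\bot^n$ is the sequence of $n$ copies of $\bot$; $\bigvee Lex_n(A)$ denotes the greatest element of $Lex_n(A)$ w.r.t. $\leq_n$ (the empty sequence when $n=0$). For $a,b\in Lex_k(A)$: $\gamma(a,b) = \min\{ i \mid a_i \ominus b_i \in C(A)\}$ and $\delta(a,b) = \min\{ i \mid (a_i \ominus b_i) \otimes b_i < a_i\}$, each equal to $k+1$ if the set is empty. *)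

theory Defs
  imports Main
begin

definition rpom :: "'a set \<Rightarrow> ('a \<Rightarrow> 'a \<Rightarrow> bool) \<Rightarrow> ('a \<Rightarrow> 'a \<Rightarrow> 'a)
    \<Rightarrow> ('a \<Rightarrow> 'a \<Rightarrow> 'a) \<Rightarrow> 'a \<Rightarrow> bool" where
  "rpom A le mult res one \<longleftrightarrow>
     (\<forall>a\<in>A. le a a) \<and>
     (\<forall>a\<in>A. \<forall>b\<in>A. le a b \<and> le b a \<longrightarrow> a = b) \<and>
     (\<forall>a\<in>A. \<forall>b\<in>A. \<forall>c\<in>A. le a b \<and> le b c \<longrightarrow> le a c) \<and>
     one \<in> A \<and>
     (\<forall>a\<in>A. \<forall>b\<in>A. mult a b \<in> A) \<and>
     (\<forall>a\<in>A. \<forall>b\<in>A. res a b \<in> A) \<and>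
     (\<forall>a\<in>A. \<forall>b\<in>A. \<forall>c\<in>A. mult (mult a b) c = mult a (mult b c)) \<and>
     (\<forall>a\<in>A. \<forall>b\<in>A. mult a b = mult b a) \<and>
     (\<forall>a\<in>A. mult one a = a) \<and>
     (\<forall>a\<in>A. \<forall>b\<in>A. \<forall>c\<in>A. le (mult b c) a \<longleftrightarrow> le c (res a b))"

definition canc :: "'a set \<Rightarrow> ('a \<Rightarrow> 'a \<Rightarrow> 'a) \<Rightarrow> 'a set" where
  "canc A mult = {c\<in>A. \<forall>a\<in>A. \<forall>b\<in>A. mult a c = mult b c \<longrightarrow> a = b}"

definition noncanc :: "'a set \<Rightarrow> ('a \<Rightarrow> 'a \<Rightarrow> 'a) \<Rightarrow> 'a set" where
  "noncanc A mult = A - canc A mult"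

(* Lex_k(A) as a set of lists of length k; Lex_0(A) = {[]}, and Lex_1(A) = {[a] | a \<in> A}
   agrees with the paper's Lex_1(A) = A. *)
fun Lex :: "'a set \<Rightarrow> ('a \<Rightarrow> 'a \<Rightarrow> 'a) \<Rightarrow> 'a \<Rightarrow> nat \<Rightarrow> 'a list set" where
  "Lex A mult bt 0 = {[]}"
| "Lex A mult bt (Suc k) =
     {c # x | c x. c \<in> canc A mult \<and> x \<in> Lex A mult bt k}
     \<union> {c # replicate k bt | c. c \<in> noncanc A mult}"

fun lex_le :: "('a \<Rightarrow> 'a \<Rightarrow> bool) \<Rightarrow> 'a list \<Rightarrow> 'a list \<Rightarrow> bool" where
  "lex_le le [] [] = True"
| "lex_le le (a # as) (b # bs) = ((le a b \<and> a \<noteq> b) \<or> (a = b \<and> lex_le le as bs))"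
| "lex_le le _ _ = False"

definition lex_top :: "'a set \<Rightarrow> ('a \<Rightarrow> 'a \<Rightarrow> bool) \<Rightarrow> ('a \<Rightarrow> 'a \<Rightarrow> 'a) \<Rightarrow> 'a \<Rightarrow> nat \<Rightarrow> 'a list" where
  "lex_top A le mult bt n =
     (THE x. x \<in> Lex A mult bt n \<and> (\<forall>y\<in>Lex A mult bt n. lex_le le y x))"

definition gam :: "'a set \<Rightarrow> ('a \<Rightarrow> 'a \<Rightarrow> 'a) \<Rightarrow> ('a \<Rightarrow> 'a \<Rightarrow> 'a) \<Rightarrow> nat
    \<Rightarrow> 'a list \<Rightarrow> 'a list \<Rightarrow> nat" where
  "gam A mult res k a b =
     (if \<exists>i\<in>{1..k}. res (a ! (i-1)) (b ! (i-1)) \<in> noncanc A mult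
      then LEAST i. i \<in> {1..k} \<and> res (a ! (i-1)) (b ! (i-1)) \<in> noncanc A mult
      else k + 1)"

definition dlt :: "('a \<Rightarrow> 'a \<Rightarrow> bool) \<Rightarrow> ('a \<Rightarrow> 'a \<Rightarrow> 'a) \<Rightarrow> ('a \<Rightarrow> 'a \<Rightarrow> 'a) \<Rightarrow> nat
    \<Rightarrow> 'a list \<Rightarrow> 'a list \<Rightarrow> nat" where
  "dlt le mult res k a b =
     (let P = (\<lambda>i. le (mult (res (a ! (i-1)) (b ! (i-1))) (b ! (i-1))) (a ! (i-1))
                  \<and> mult (res (a ! (i-1)) (b ! (i-1))) (b ! (i-1)) \<noteq> a ! (i-1))
      in if \<exists>i\<in>{1..k}. P i then LEAST i. i \<in> {1..k} \<and> P i else k + 1)"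

definition lex_res :: "'a set \<Rightarrow> ('a \<Rightarrow> 'a \<Rightarrow> bool) \<Rightarrow> ('a \<Rightarrow> 'a \<Rightarrow> 'a) \<Rightarrow> ('a \<Rightarrow> 'a \<Rightarrow> 'a)
    \<Rightarrow> 'a \<Rightarrow> nat \<Rightarrow> 'a list \<Rightarrow> 'a list \<Rightarrow> 'a list" where
  "lex_res A le mult res bt k a b =
     (let g = gam A mult res k a b; d = dlt le mult res k a b; r = map2 res a b in
      if k + 1 = g \<and> g = d then r
      else if k + 1 \<noteq> g \<and> g \<le> d then take g r @ replicate (k - g) bt
      else take d r @ lex_top A le mult bt (k - d))"

end

(*
  The bottom is absorbing (\<bottom> \<otimes> c \<le> \<bottom> by residuation), products of cancellative
  elements are cancellative and a product with a non-cancellative factor is not,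
  so Lex_k(A) is closed under the componentwise product.
  For residuation put r = a1 \<ominus> b1.  Then b1 \<otimes> c1 \<le> a1 iff c1 \<le> r, and a tie
  b1 \<otimes> c1 = a1 with c1 \<le> r forces r \<otimes> b1 = a1, after which cancelling b1 turns it
  into c1 = r.  The three clauses of \<ominus>_k are exactly the three possibilities:
  r non-cancellative (then c1 = r forces the tail of c to be \<bottom>s, so ties are
  harmless), r \<otimes> b1 < a1 (no tie is possible, so the tail is the greatest word),
  and r \<otimes> b1 = a1 (ties are decided by the tails, recursively).
*)

theory Submission
  imports Defs
begin

definition first_index :: "nat \<Rightarrow> (nat \<Rightarrow> bool) \<Rightarrow> nat" where
  "first_index k P = (if \<exists>i\<in>{1..k}. P i then LEAST i. i \<in> {1..k} \<and> P i else k + 1)"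

lemma first_index_eq_Least: "first_index k P = (LEAST i. (i \<in> {1..k} \<and> P i) \<or> i = Suc k)"
proof (cases "\<exists>i\<in>{1..k}. P i")
  case True
  let ?m = "LEAST i. i \<in> {1..k} \<and> P i"
  have m: "?m \<in> {1..k} \<and> P ?m"
    using True by (metis (mono_tags, lifting) LeastI)
  have "(LEAST i. (i \<in> {1..k} \<and> P i) \<or> i = Suc k) = ?m"
    by (rule Least_equality) (use m in \<open>auto intro: Least_le\<close>)
  then show ?thesis using True by (simp add: first_index_def)
next
  case False
  then show ?thesis unfolding first_index_def by (intro Least_equality[symmetric]) auto
qed

lemma first_index_cong:
  "(\<And>i. i \<in> {1..k} \<Longrightarrow> P i = Q i) \<Longrightarrow> first_index k P = first_index k Q"
  unfolding first_index_eq_Least by metis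

lemma first_index_ge_1: "1 \<le> first_index k P"
  unfolding first_index_eq_Least by (rule LeastI2[of _ "Suc k"]) auto

lemma first_index_Suc:
  "first_index (Suc k) P = (if P 1 then 1 else Suc (first_index k (\<lambda>i. P (Suc i))))"
proof (cases "P 1")
  case True
  then show ?thesis unfolding first_index_eq_Least by (intro Least_equality) auto
next
  case False
  have "first_index (Suc k) P =
      Suc (LEAST i. (Suc i \<in> {1..Suc k} \<and> P (Suc i)) \<or> Suc i = Suc (Suc k))"
    unfolding first_index_eq_Least by (rule Least_Suc[of _ "Suc (Suc k)"]) auto
  also have "(\<lambda>i. (Suc i \<in> {1..Suc k} \<and> P (Suc i)) \<or> Suc i = Suc (Suc k)) =
      (\<lambda>i. (i \<in> {1..k} \<and> P (Suc i)) \<or> i = Suc k)"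
    using False by (auto simp: fun_eq_iff Suc_le_eq intro: gr0I)
  finally show ?thesis using False by (simp add: first_index_eq_Least)
qed

lemma gam_eq_first_index:
  "gam A mult res k a b = first_index k (\<lambda>i. res (a ! (i-1)) (b ! (i-1)) \<in> noncanc A mult)"
  unfolding gam_def first_index_def by simp

lemma dlt_eq_first_index:
  "dlt le mult res k a b = first_index k (\<lambda>i.
     le (mult (res (a ! (i-1)) (b ! (i-1))) (b ! (i-1))) (a ! (i-1)) \<and>
     mult (res (a ! (i-1)) (b ! (i-1))) (b ! (i-1)) \<noteq> a ! (i-1))"
  unfolding dlt_def first_index_def Let_def by simp

lemma gam_Cons:
  "gam A mult res (Suc k) (a1 # a) (b1 # b) =
    (if res a1 b1 \<in> noncanc A mult then 1 else Suc (gam A mult res k a b))"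
  unfolding gam_eq_first_index first_index_Suc by (auto intro!: first_index_cong)

lemma dlt_Cons:
  "dlt le mult res (Suc k) (a1 # a) (b1 # b) =
    (if le (mult (res a1 b1) b1) a1 \<and> mult (res a1 b1) b1 \<noteq> a1 then 1
     else Suc (dlt le mult res k a b))"
  unfolding dlt_eq_first_index first_index_Suc by (auto intro!: first_index_cong)

lemma lex_res_Nil: "lex_res A le mult res bt 0 [] [] = []"
  unfolding lex_res_def gam_def dlt_def Let_def by simp

lemma lex_res_Cons:
  "lex_res A le mult res bt (Suc k) (a1 # a) (b1 # b) =
    (if res a1 b1 \<in> noncanc A mult then res a1 b1 # replicate k bt
     else if le (mult (res a1 b1) b1) a1 \<and> mult (res a1 b1) b1 \<noteq> a1
       then res a1 b1 # lex_top A le mult bt k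
     else res a1 b1 # lex_res A le mult res bt k a b)"
proof -
  have "1 \<le> gam A mult res k a b"
    unfolding gam_eq_first_index by (rule first_index_ge_1)
  then show ?thesis
    by (auto simp: lex_res_def Let_def gam_Cons dlt_Cons)
qed

lemma lex_le_refl: "lex_le le x x"
  by (induction x) auto

lemma lex_le_Nil_left [simp]: "lex_le le [] y \<longleftrightarrow> y = []"
  by (cases y) simp_all

lemma lex_le_Cons_Cons_if_refl:
  "le x x \<Longrightarrow> lex_le le (x # xs) (y # ys) \<longleftrightarrow> le x y \<and> (x = y \<longrightarrow> lex_le le xs ys)"
  by auto

lemma lex_le_antisym:
  assumes "antisymp_on A le"
  shows "set x \<subseteq> A \<Longrightarrow> set y \<subseteq> A \<Longrightarrow> lex_le le x y \<Longrightarrow> lex_le le y x \<Longrightarrow> x = y"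
proof (induction x arbitrary: y)
  case (Cons a x)
  then obtain b y' where "y = b # y'" by (cases y) auto
  with Cons show ?case using antisymp_onD[OF assms] by auto
qed simp

lemma lex_le_trans:
  assumes "antisymp_on A le" and "transp_on A le"
  shows "set x \<subseteq> A \<Longrightarrow> set y \<subseteq> A \<Longrightarrow> set z \<subseteq> A \<Longrightarrow>
    lex_le le x y \<Longrightarrow> lex_le le y z \<Longrightarrow> lex_le le x z"
proof (induction x arbitrary: y z)
  case (Cons a x)
  obtain b y' c z' where yz: "y = b # y'" "z = c # z'"
    using Cons.prems(4,5) by (cases y; cases z) simp_all
  have abc: "a \<in> A" "b \<in> A" "c \<in> A"
    using Cons.prems yz by auto
  have ab: "(le a b \<and> a \<noteq> b) \<or> (a = b \<and> lex_le le x y')"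
    and bc: "(le b c \<and> b \<noteq> c) \<or> (b = c \<and> lex_le le y' z')"
    using Cons.prems yz by simp_all
  have "lex_le le x y' \<Longrightarrow> lex_le le y' z' \<Longrightarrow> lex_le le x z'"
    using Cons.IH[of y' z'] Cons.prems yz by simp
  moreover have "le a c" if "le a b" "le b c"
    using transp_onD[OF assms(2) abc that] .
  moreover have "b = c" if "le b c" "le c b"
    using antisymp_onD[OF assms(1) abc(2,3) that] .
  ultimately show ?case
    using ab bc yz by auto
qed simp

locale residuated_pom =
  fixes A :: "'a set" and le :: "'a \<Rightarrow> 'a \<Rightarrow> bool"
    and mult res :: "'a \<Rightarrow> 'a \<Rightarrow> 'a" and one :: 'a
  assumes le_refl: "a \<in> A \<Longrightarrow> le a a"
    and le_antisym: "a \<in> A \<Longrightarrow> b \<in> A \<Longrightarrow> le a b \<Longrightarrow> le b a \<Longrightarrow> a = b"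
    and le_trans: "a \<in> A \<Longrightarrow> b \<in> A \<Longrightarrow> c \<in> A \<Longrightarrow> le a b \<Longrightarrow> le b c \<Longrightarrow> le a c"
    and one_closed: "one \<in> A"
    and mult_closed: "a \<in> A \<Longrightarrow> b \<in> A \<Longrightarrow> mult a b \<in> A"
    and res_closed: "a \<in> A \<Longrightarrow> b \<in> A \<Longrightarrow> res a b \<in> A"
    and mult_assoc: "a \<in> A \<Longrightarrow> b \<in> A \<Longrightarrow> c \<in> A \<Longrightarrow> mult (mult a b) c = mult a (mult b c)"
    and mult_commute: "a \<in> A \<Longrightarrow> b \<in> A \<Longrightarrow> mult a b = mult b a"
    and mult_one_left: "a \<in> A \<Longrightarrow> mult one a = a"
    and residuation: "a \<in> A \<Longrightarrow> b \<in> A \<Longrightarrow> c \<in> A \<Longrightarrow> le (mult b c) a \<longleftrightarrow> le c (res a b)"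

lemma rpom_iff_residuated_pom: "rpom A le mult res one \<longleftrightarrow> residuated_pom A le mult res one"
  unfolding rpom_def residuated_pom_def by (simp only: Ball_def conj_assoc all_simps imp_conjL)

context residuated_pom
begin

lemma antisymp_on_le: "antisymp_on A le"
  by (rule antisymp_onI) (rule le_antisym)

lemma transp_on_le: "transp_on A le"
  by (rule transp_onI) (rule le_trans)

lemma mult_res_le: "a \<in> A \<Longrightarrow> b \<in> A \<Longrightarrow> le (mult (res a b) b) a"
  using residuation[of a b "res a b"] le_refl[of "res a b"] res_closed mult_commute[of b "res a b"]
  by auto

lemma mult_mono_left:
  assumes "b \<in> A" "b' \<in> A" "c \<in> A" "le b b'"
  shows "le (mult b c) (mult b' c)"
proof -
  have "mult b' c \<in> A" using assms mult_closed by blast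
  then have "le b' (res (mult b' c) c)"
    using residuation assms le_refl mult_commute by metis
  then have "le b (res (mult b' c) c)"
    using le_trans assms res_closed \<open>mult b' c \<in> A\<close> by blast
  then show ?thesis
    using residuation assms mult_commute \<open>mult b' c \<in> A\<close> by metis
qed

lemma res_mult_eq_if_mult_eq:
  assumes "a \<in> A" "b \<in> A" "c \<in> A" "le c (res a b)" "mult b c = a"
  shows "mult (res a b) b = a"
proof -
  have r: "res a b \<in> A" using res_closed assms by blast
  have "mult c b = a" using assms mult_commute by simp
  then have "le a (mult (res a b) b)"
    using mult_mono_left[OF assms(3) r assms(2) assms(4)] by simp
  then show ?thesis
    using le_antisym[OF mult_closed[OF r assms(2)] assms(1)] mult_res_le[OF assms(1,2)] by blast
qed

lemma canc_subset: "canc A mult \<subseteq> A"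
  by (auto simp: canc_def)

lemma noncanc_subset: "noncanc A mult \<subseteq> A"
  by (auto simp: noncanc_def)

lemma canc_iff_not_noncanc: "a \<in> A \<Longrightarrow> a \<in> canc A mult \<longleftrightarrow> a \<notin> noncanc A mult"
  by (auto simp: noncanc_def)

lemma canc_cancel: "c \<in> canc A mult \<Longrightarrow> a \<in> A \<Longrightarrow> b \<in> A \<Longrightarrow> mult a c = mult b c \<Longrightarrow> a = b"
  by (auto simp: canc_def)

lemma mult_eq_iff_eq_res:
  assumes "b \<in> canc A mult" "a \<in> A" "c \<in> A" "mult (res a b) b = a"
  shows "mult b c = a \<longleftrightarrow> c = res a b"
proof -
  have "b \<in> A" "res a b \<in> A" using assms canc_subset res_closed by auto
  then have "mult b c = mult c b" "mult b (res a b) = mult (res a b) b"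
    using assms(3) mult_commute by auto
  then show ?thesis
    using canc_cancel[OF assms(1) assms(3) \<open>res a b \<in> A\<close>] assms(4) by auto
qed

lemma lex_le_map2_mult_Cons_iff:
  assumes "a1 \<in> A" "b1 \<in> A" "c1 \<in> A"
  shows "lex_le le (map2 mult (b1 # b) (c1 # c)) (a1 # a) \<longleftrightarrow>
    le c1 (res a1 b1) \<and> (mult b1 c1 = a1 \<longrightarrow> lex_le le (map2 mult b c) a)"
  using residuation[OF assms] le_refl[OF assms(1)] by auto

lemma one_canc: "one \<in> canc A mult"
  using one_closed mult_one_left mult_commute by (auto simp: canc_def)

lemma mult_canc:
  assumes "x \<in> canc A mult" "y \<in> canc A mult"
  shows "mult x y \<in> canc A mult"
proof -
  have xy: "x \<in> A" "y \<in> A" using assms canc_subset by auto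
  have "a = b" if "a \<in> A" "b \<in> A" "mult a (mult x y) = mult b (mult x y)" for a b
  proof -
    have "mult (mult a x) y = mult (mult b x) y" using that xy mult_assoc by metis
    then have "mult a x = mult b x" using canc_cancel assms(2) that xy mult_closed by blast
    then show "a = b" using canc_cancel assms(1) that by blast
  qed
  then show ?thesis using xy mult_closed by (auto simp: canc_def)
qed

lemma mult_noncanc:
  assumes "x \<in> noncanc A mult" "y \<in> A"
  shows "mult x y \<in> noncanc A mult"
proof (rule ccontr)
  have x: "x \<in> A" using assms noncanc_subset by auto
  assume "mult x y \<notin> noncanc A mult"
  then have xy: "mult x y \<in> canc A mult" using canc_iff_not_noncanc x assms mult_closed by blast
  have "a = b" if "a \<in> A" "b \<in> A" "mult a x = mult b x" for a b
    using canc_cancel[OF xy that(1,2)] that x assms(2) mult_assoc by metis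
  then have "x \<in> canc A mult" using x by (auto simp: canc_def)
  then show False using assms canc_iff_not_noncanc x by blast
qed

lemma map2_mult_assoc:
  "length a = length b \<Longrightarrow> length b = length c \<Longrightarrow> set a \<subseteq> A \<Longrightarrow> set b \<subseteq> A \<Longrightarrow> set c \<subseteq> A \<Longrightarrow>
   map2 mult (map2 mult a b) c = map2 mult a (map2 mult b c)"
proof (induction a arbitrary: b c)
  case (Cons x a)
  then obtain y b' z c' where "b = y # b'" "c = z # c'"
    by (cases b; cases c) simp_all
  with Cons.prems Cons.IH[of b' c'] show ?case by (simp add: mult_assoc)
qed simp

lemma map2_mult_commute:
  "length a = length b \<Longrightarrow> set a \<subseteq> A \<Longrightarrow> set b \<subseteq> A \<Longrightarrow> map2 mult a b = map2 mult b a"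
proof (induction a arbitrary: b)
  case (Cons x a)
  then obtain y b' where "b = y # b'"
    by (cases b) simp_all
  with Cons.prems Cons.IH[of b'] show ?case by (simp add: mult_commute)
qed simp

lemma map2_replicate_one_left: "set a \<subseteq> A \<Longrightarrow> map2 mult (replicate (length a) one) a = a"
  by (induction a) (auto simp: mult_one_left)

end

locale residuated_pom_bot = residuated_pom +
  fixes bt :: 'a
  assumes bt_closed: "bt \<in> A"
    and bt_le: "a \<in> A \<Longrightarrow> le bt a"
begin

lemma mult_bt_left: "a \<in> A \<Longrightarrow> mult bt a = bt"
proof -
  assume a: "a \<in> A"
  have "le (mult a bt) bt"
    using residuation[OF bt_closed a bt_closed] bt_le res_closed a bt_closed by blast
  then show ?thesis
    using le_antisym bt_le mult_closed mult_commute a bt_closed by metis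
qed

lemma mult_bt_right: "a \<in> A \<Longrightarrow> mult a bt = bt"
  using mult_bt_left mult_commute bt_closed by metis

lemma le_res_bt_bt: "a \<in> A \<Longrightarrow> le a (res bt bt)"
  using residuation[OF bt_closed bt_closed] mult_bt_left le_refl bt_closed by metis

abbreviation L :: "nat \<Rightarrow> 'a list set" where
  "L k \<equiv> Lex A mult bt k"

lemma Lex_length_set: "x \<in> L k \<Longrightarrow> length x = k \<and> set x \<subseteq> A"
  by (induction k arbitrary: x) (fastforce simp: canc_def noncanc_def bt_closed)+

lemma replicate_bt_in_Lex: "replicate k bt \<in> L k"
  by (induction k) (use bt_closed canc_iff_not_noncanc in auto)

lemma replicate_one_in_Lex: "replicate k one \<in> L k"
  by (induction k) (auto simp: one_canc)

lemma Lex_SucE: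
  assumes "x \<in> L (Suc k)"
  obtains c x' where "x = c # x'" "c \<in> A" "x' \<in> L k" "c \<in> noncanc A mult \<Longrightarrow> x' = replicate k bt"
  using assms canc_subset noncanc_subset replicate_bt_in_Lex canc_iff_not_noncanc
  by (auto intro: that)

lemma replicate_bt_lex_le: "length x = k \<Longrightarrow> set x \<subseteq> A \<Longrightarrow> lex_le le (replicate k bt) x"
  by (induction x arbitrary: k) (auto simp: bt_le)

lemma map2_replicate_bt_left:
  "length x = k \<Longrightarrow> set x \<subseteq> A \<Longrightarrow> map2 mult (replicate k bt) x = replicate k bt"
  by (induction x arbitrary: k) (auto simp: mult_bt_left)

lemma map2_replicate_bt_right:
  "length x = k \<Longrightarrow> set x \<subseteq> A \<Longrightarrow> map2 mult x (replicate k bt) = replicate k bt"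
  by (induction x arbitrary: k) (auto simp: mult_bt_right)

lemma Lex_greatest_exists: "\<exists>t\<in>L n. \<forall>y\<in>L n. lex_le le y t"
proof (induction n)
  case (Suc n)
  then obtain t where t: "t \<in> L n" "\<forall>y\<in>L n. lex_le le y t" by blast
  define T where "T = res bt bt"
  have T: "T \<in> A" "\<And>a. a \<in> A \<Longrightarrow> le a T"
    unfolding T_def using res_closed bt_closed le_res_bt_bt by auto
  show ?case
  proof (cases "T \<in> noncanc A mult")
    case True
    have "lex_le le y (T # replicate n bt)" if "y \<in> L (Suc n)" for y
      using that by (rule Lex_SucE) (use T True lex_le_refl in auto)
    then show ?thesis
      using True replicate_bt_in_Lex by (intro bexI[of _ "T # replicate n bt"]) auto
  next
    case False
    have "lex_le le y (T # t)" if "y \<in> L (Suc n)" for y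
      using that by (rule Lex_SucE) (use T t in auto)
    then show ?thesis
      using False T t canc_iff_not_noncanc by (intro bexI[of _ "T # t"]) auto
  qed
qed simp

lemma lex_top_greatest:
  "lex_top A le mult bt n \<in> L n \<and> (\<forall>y\<in>L n. lex_le le y (lex_top A le mult bt n))"
proof -
  have "\<exists>!t. t \<in> L n \<and> (\<forall>y\<in>L n. lex_le le y t)"
    using Lex_greatest_exists lex_le_antisym[OF antisymp_on_le] Lex_length_set by metis
  then show ?thesis unfolding lex_top_def by (rule theI')
qed

lemma map2_mult_in_Lex: "a \<in> L k \<Longrightarrow> b \<in> L k \<Longrightarrow> map2 mult a b \<in> L k"
proof (induction k arbitrary: a b)
  case (Suc k)
  obtain a1 a' where a: "a = a1 # a'" "a1 \<in> A" "a' \<in> L k"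
      "a1 \<in> noncanc A mult \<Longrightarrow> a' = replicate k bt"
    using Suc.prems(1) by (blast elim: Lex_SucE)
  obtain b1 b' where b: "b = b1 # b'" "b1 \<in> A" "b' \<in> L k"
      "b1 \<in> noncanc A mult \<Longrightarrow> b' = replicate k bt"
    using Suc.prems(2) by (blast elim: Lex_SucE)
  have a': "length a' = k" "set a' \<subseteq> A" and b': "length b' = k" "set b' \<subseteq> A"
    using Lex_length_set a(3) b(3) by auto
  consider "a1 \<in> noncanc A mult" | "b1 \<in> noncanc A mult"
    | "a1 \<in> canc A mult" "b1 \<in> canc A mult"
    using a b canc_iff_not_noncanc by blast
  then show ?case
  proof cases
    case 1
    then show ?thesis
      using a b mult_noncanc map2_replicate_bt_left[OF b'] by auto
  next
    case 2
    then show ?thesis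
      using a b mult_noncanc[of b1 a1] mult_commute[of a1 b1] map2_replicate_bt_right[OF a'] by auto
  next
    case 3
    then show ?thesis
      using a b mult_canc Suc.IH by auto
  qed
qed simp

lemma lex_res_in_Lex: "a \<in> L k \<Longrightarrow> b \<in> L k \<Longrightarrow> lex_res A le mult res bt k a b \<in> L k"
proof (induction k arbitrary: a b)
  case 0
  then show ?case by (simp add: lex_res_Nil)
next
  case (Suc k)
  obtain a1 a' where a: "a = a1 # a'" "a1 \<in> A" "a' \<in> L k"
    using Suc.prems(1) by (blast elim: Lex_SucE)
  obtain b1 b' where b: "b = b1 # b'" "b1 \<in> A" "b' \<in> L k"
    using Suc.prems(2) by (blast elim: Lex_SucE)
  have "res a1 b1 \<in> A"
    using a b res_closed by blast
  then show ?case
    unfolding a b lex_res_Cons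
    using Suc.IH[OF a(3) b(3)] lex_top_greatest[of k] canc_iff_not_noncanc by auto
qed

lemma lex_le_map2_mult_replicate_bt:
  assumes "a \<in> L k" "b \<in> L k" "c \<in> L k" "b = replicate k bt \<or> c = replicate k bt"
  shows "lex_le le (map2 mult b c) a"
proof -
  have "map2 mult b c = replicate k bt"
    using assms(4) Lex_length_set[OF assms(2)] Lex_length_set[OF assms(3)]
      map2_replicate_bt_left map2_replicate_bt_right by blast
  then show ?thesis
    using Lex_length_set[OF assms(1)] replicate_bt_lex_le[of a k] by simp
qed

lemma lex_le_map2_mult_iff:
  "a \<in> L k \<Longrightarrow> b \<in> L k \<Longrightarrow> c \<in> L k \<Longrightarrow>
   lex_le le (map2 mult b c) a \<longleftrightarrow> lex_le le c (lex_res A le mult res bt k a b)"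
proof (induction k arbitrary: a b c)
  case 0
  then show ?case by (simp add: lex_res_Nil)
next
  case (Suc k)
  obtain a1 a' where a: "a = a1 # a'" "a1 \<in> A" "a' \<in> L k"
    using Suc.prems(1) by (blast elim: Lex_SucE)
  obtain b1 b' where b: "b = b1 # b'" "b1 \<in> A" "b' \<in> L k"
      "b1 \<in> noncanc A mult \<Longrightarrow> b' = replicate k bt"
    using Suc.prems(2) by (blast elim: Lex_SucE)
  obtain c1 c' where c: "c = c1 # c'" "c1 \<in> A" "c' \<in> L k"
      "c1 \<in> noncanc A mult \<Longrightarrow> c' = replicate k bt"
    using Suc.prems(3) by (blast elim: Lex_SucE)
  define r1 where "r1 = res a1 b1"
  define tail_le where "tail_le \<longleftrightarrow> lex_le le (map2 mult b' c') a'"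
  have lhs: "lex_le le (map2 mult b c) a \<longleftrightarrow> le c1 r1 \<and> (mult b1 c1 = a1 \<longrightarrow> tail_le)"
    unfolding a b c r1_def tail_le_def by (rule lex_le_map2_mult_Cons_iff[OF a(2) b(2) c(2)])
  have rhs: "lex_le le c (r1 # x) \<longleftrightarrow> le c1 r1 \<and> (c1 = r1 \<longrightarrow> lex_le le c' x)" for x
    unfolding c by (rule lex_le_Cons_Cons_if_refl[of le c1, OF le_refl[OF c(2)]])
  have tail_le_if_noncanc: "tail_le" if "b1 \<in> noncanc A mult \<or> c1 \<in> noncanc A mult"
    unfolding tail_le_def using that b(4) c(4) lex_le_map2_mult_replicate_bt a(3) b(3) c(3) by blast
  have tie_iff: "mult b1 c1 = a1 \<longleftrightarrow> c1 = r1"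
    if "b1 \<in> canc A mult" "mult r1 b1 = a1"
    using mult_eq_iff_eq_res[OF that(1) a(2) c(2)] that unfolding r1_def by blast
  have tie_imp: "mult r1 b1 = a1" if "le c1 r1" "mult b1 c1 = a1"
    using res_mult_eq_if_mult_eq[OF a(2) b(2) c(2)] that unfolding r1_def by blast
  consider (noncanc) "r1 \<in> noncanc A mult"
    | (strict) "r1 \<notin> noncanc A mult" "mult r1 b1 \<noteq> a1"
    | (exact) "r1 \<notin> noncanc A mult" "mult r1 b1 = a1"
    by blast
  then show ?case
  proof cases
    case noncanc
    have "tail_le" if "le c1 r1" "mult b1 c1 = a1"
      using tail_le_if_noncanc tie_iff[OF _ tie_imp[OF that]] noncanc that
        canc_iff_not_noncanc[OF b(2)] by blast
    moreover have "lex_le le c (r1 # replicate k bt) \<longleftrightarrow> le c1 r1"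
      using rhs c(4) noncanc lex_le_refl by auto
    ultimately show ?thesis
      using lhs noncanc unfolding a b lex_res_Cons r1_def[symmetric] by auto
  next
    case strict
    have "lex_le le c (r1 # lex_top A le mult bt k) \<longleftrightarrow> le c1 r1"
      using rhs c(3) lex_top_greatest by auto
    then show ?thesis
      using lhs strict tie_imp mult_res_le[OF a(2) b(2)]
      unfolding a b lex_res_Cons r1_def[symmetric] by auto
  next
    case exact
    have "(mult b1 c1 = a1 \<longrightarrow> tail_le) \<longleftrightarrow> (c1 = r1 \<longrightarrow> tail_le)"
      using tail_le_if_noncanc tie_iff[OF _ exact(2)] canc_iff_not_noncanc[OF b(2)] by blast
    moreover have "lex_le le c' (lex_res A le mult res bt k a' b') \<longleftrightarrow> tail_le"
      unfolding tail_le_def using Suc.IH[OF a(3) b(3) c(3)] ..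
    ultimately show ?thesis
      using lhs rhs exact unfolding a b lex_res_Cons r1_def[symmetric] by auto
  qed
qed

lemma residuated_pom_Lex:
  "residuated_pom (L k) (lex_le le) (map2 mult) (lex_res A le mult res bt k) (replicate k one)"
proof unfold_locales
  have lists: "length x = k \<and> set x \<subseteq> A" if "x \<in> L k" for x
    using that by (rule Lex_length_set)
  show "x = y" if "x \<in> L k" "y \<in> L k" "lex_le le x y" "lex_le le y x" for x y
    using that lists lex_le_antisym[OF antisymp_on_le] by blast
  show "lex_le le x z" if "x \<in> L k" "y \<in> L k" "z \<in> L k" "lex_le le x y" "lex_le le y z" for x y z
    using that lists lex_le_trans[OF antisymp_on_le transp_on_le] by blast
  show "map2 mult (map2 mult x y) z = map2 mult x (map2 mult y z)"
    if "x \<in> L k" "y \<in> L k" "z \<in> L k" for x y z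
    using that lists map2_mult_assoc by simp
  show "map2 mult x y = map2 mult y x" if "x \<in> L k" "y \<in> L k" for x y
    using that lists map2_mult_commute by simp
  show "map2 mult (replicate k one) x = x" if "x \<in> L k" for x
    using that lists map2_replicate_one_left by metis
qed (simp_all add: lex_le_refl replicate_one_in_Lex map2_mult_in_Lex lex_res_in_Lex
    lex_le_map2_mult_iff)

end

theorem theorem2:
  fixes A :: "'a set" and le :: "'a \<Rightarrow> 'a \<Rightarrow> bool"
    and mult res :: "'a \<Rightarrow> 'a \<Rightarrow> 'a" and one bt :: 'a and k :: nat
  assumes "rpom A le mult res one"
    and "bt \<in> A" and "\<forall>a\<in>A. le bt a"
    and "k \<ge> 1"
  shows "rpom (Lex A mult bt k) (lex_le le) (map2 mult) (lex_res A le mult res bt k)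
           (replicate k one)"
proof -
  interpret residuated_pom_bot A le mult res one bt
    using assms(1-3)
    unfolding rpom_iff_residuated_pom residuated_pom_bot_def residuated_pom_bot_axioms_def
    by blast
  show ?thesis
    unfolding rpom_iff_residuated_pom by (rule residuated_pom_Lex)
qed

end
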